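(* Let $F|R$ be an extension of ordered fields with canonical valuation $v$, and let $\tilde\iota:\mathcal C(R)\to\mathcal C(F)$ be any map constructed as follows: for a non-ball cut $C=(D,E)$ of $R$, $\tilde\iota(C)$ is one of $D^{+}_F$ or $E^{-}_F$; if $C$ is the lower edge $B_0^-$ (resp. upper edge $B_0^+$) in $R$ of a ball $B_0\neq R$ with ball complement $(D,E)$ in $R$, then $\tilde\iota(C)=D^{+}_F$ (resp. $E^{-}_F$); and $\tilde\iota((\emptyset,R))=R^{-}_F$, $\tilde\iota((R,\emptyset))=R^{+}_F$. If $vR$ is cofinal in $vF$, then $\tilde\iota$ sends principal cuts of $R$ to principal cuts of $F$. Otherwise, no principal cut of $R$ is sent to a principal cut of $F$.
   Context: The canonical valuation $v$ of an ordered field has as valuation ring the convex hull of $\mathbb Z$; $vR\subseteq vF$ are the value groups. For a totally ordered set $T$, a cut is a pair $(D,E)$ with $D<E$ and $D\cup E=T$; $\mathcal C(T)$ is the set of cuts. A cut is principal if $D$ has a last element or $E$ has a first element. For nonempty $A\subseteq T$, $A^+=(D,T\setminus D)$ with $D$ the smallest initial segment containing $A$, and $A^-=(T\setminus E,E)$ with $E$ the smallest final segment containing $A$; for $A\subseteq R$, $A^{\pm}_F$ denote these cuts taken in $F$. For an ordered field $K$, $a\in K$ and a final segment $S$ of $vK$ (possibly empty), $B_S(a,K)=\{b\in K\mid v(a-b)\in S\cup\{\infty\}\}$ is a ball. A ball complement of a ball $B$ is a pair $(D,E)$ with $D<B<E$ and $D\cup B\cup E=K$. A cut is a ball cut if it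 equals $B^+$ (upper edge) or $B^-$ (lower edge) of some ball $B$, otherwise it is a non-ball cut. *)

theory Defs
  imports Main
begin

text \<open>The ambient ordered field F is the type 'a; the subfield R is a subset of it.\<close>

definition is_subfield :: "'a::linordered_field set \<Rightarrow> bool" where
  "is_subfield R \<longleftrightarrow> 0 \<in> R \<and> 1 \<in> R \<and>
     (\<forall>x\<in>R. \<forall>y\<in>R. x + y \<in> R \<and> x * y \<in> R) \<and>
     (\<forall>x\<in>R. - x \<in> R) \<and> (\<forall>x\<in>R. x \<noteq> 0 \<longrightarrow> inverse x \<in> R)"

text \<open>Valuation ring of the canonical valuation: the convex hull of the integers.\<close>
definition cval_ring :: "'a::linordered_field set" where
  "cval_ring = {x. \<exists>m n::int. of_int m \<le> x \<and> x \<le> of_int n}"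

text \<open>Canonical valuation: v(x) is the coset of x modulo the units of the valuation ring
  (so the value group is F^x / O^x, and v(0) = {0} plays the role of \<infinity>).\<close>
definition cval :: "'a::linordered_field \<Rightarrow> 'a set" where
  "cval x = {x * u | u. u \<in> cval_ring \<and> u \<noteq> 0 \<and> inverse u \<in> cval_ring}"

text \<open>Value group vK of a subfield K (for K = UNIV this is vF).\<close>
definition value_set :: "'a::linordered_field set \<Rightarrow> 'a set set" where
  "value_set K = cval ` (K - {0})"

definition val_le :: "'a::linordered_field set \<Rightarrow> 'a set \<Rightarrow> bool" where
  "val_le g h \<longleftrightarrow> (\<exists>x\<in>g. \<exists>y\<in>h. x \<noteq> 0 \<and> y / x \<in> cval_ring)"

definition final_segment :: "'a::linordered_field set set \<Rightarrow> 'a set set \<Rightarrow> bool" where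
  "final_segment G S \<longleftrightarrow> S \<subseteq> G \<and> (\<forall>g\<in>S. \<forall>h\<in>G. val_le g h \<longrightarrow> h \<in> S)"

definition vball :: "'a::linordered_field set set \<Rightarrow> 'a \<Rightarrow> 'a set \<Rightarrow> 'a set" where
  "vball S a K = {b\<in>K. cval (a - b) \<in> S \<union> {cval 0}}"

definition is_ball :: "'a::linordered_field set \<Rightarrow> 'a set \<Rightarrow> bool" where
  "is_ball K B \<longleftrightarrow> (\<exists>a\<in>K. \<exists>S. final_segment (value_set K) S \<and> B = vball S a K)"

definition is_cut :: "'a::linorder set \<Rightarrow> 'a set \<times> 'a set \<Rightarrow> bool" where
  "is_cut T C \<longleftrightarrow> fst C \<union> snd C = T \<and> (\<forall>d\<in>fst C. \<forall>e\<in>snd C. d < e)"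

definition principal_cut :: "'a::linorder set \<times> 'a set \<Rightarrow> bool" where
  "principal_cut C \<longleftrightarrow> (\<exists>d\<in>fst C. \<forall>x\<in>fst C. x \<le> d) \<or> (\<exists>e\<in>snd C. \<forall>x\<in>snd C. e \<le> x)"

definition upper_cut :: "'a::linorder set \<Rightarrow> 'a set \<Rightarrow> 'a set \<times> 'a set" where
  "upper_cut T A = ({t\<in>T. \<exists>a\<in>A. t \<le> a}, T - {t\<in>T. \<exists>a\<in>A. t \<le> a})"

definition lower_cut :: "'a::linorder set \<Rightarrow> 'a set \<Rightarrow> 'a set \<times> 'a set" where
  "lower_cut T A = (T - {t\<in>T. \<exists>a\<in>A. a \<le> t}, {t\<in>T. \<exists>a\<in>A. a \<le> t})"

definition ball_cut :: "'a::linordered_field set \<Rightarrow> 'a set \<times> 'a set \<Rightarrow> bool" where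
  "ball_cut K C \<longleftrightarrow> (\<exists>B. is_ball K B \<and> (C = upper_cut K B \<or> C = lower_cut K B))"

definition ball_complement :: "'a::linordered_field set \<Rightarrow> 'a set \<Rightarrow> 'a set \<times> 'a set \<Rightarrow> bool" where
  "ball_complement K B C \<longleftrightarrow> (\<forall>d\<in>fst C. \<forall>b\<in>B. d < b) \<and> (\<forall>b\<in>B. \<forall>e\<in>snd C. b < e)
     \<and> fst C \<union> B \<union> snd C = K"

end

theory Submission
  imports Defs
begin

text \<open>Every principal cut of R is an edge of a singleton ball \<open>{a}\<close>, so only the hypothesis
  on ball cuts matters. It sends the upper edge of \<open>{a}\<close> to the cut of F just below
  \<open>{t\<in>R. a < t}\<close>; as this set has no least element, that cut is principal iff \<open>a\<close> is its
  infimum in F, i.e. iff R has positive elements below every positive element of F; dually for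
  lower edges. Since \<open>v x \<le> v y\<close> means \<open>\<bar>y\<bar> \<le> n \<bar>x\<bar>\<close> for some natural \<open>n\<close>, this last condition
  says precisely that vR is cofinal in vF.\<close>

lemma principal_cut_cases:
  fixes T :: "'a::linorder set"
  assumes "is_cut T C" "principal_cut C"
  obtains a where "a \<in> T" "C = upper_cut T {a}"
    | a where "a \<in> T" "C = lower_cut T {a}"
proof -
  obtain D E where C: "C = (D, E)" by (cases C)
  from assms C have DE: "D \<union> E = T" "\<And>d e. d \<in> D \<Longrightarrow> e \<in> E \<Longrightarrow> d < e"
    by (auto simp: is_cut_def)
  from assms(2) C consider a where "a \<in> D" "\<forall>x\<in>D. x \<le> a" | a where "a \<in> E" "\<forall>x\<in>E. a \<le> x"
    by (auto simp: principal_cut_def)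
  then show thesis
  proof cases
    case (1 a)
    with DE have "C = upper_cut T {a}"
      by (auto simp: C upper_cut_def) (meson not_le)+
    with 1 DE show thesis using that(1) by blast
  next
    case (2 a)
    with DE have "C = lower_cut T {a}"
      by (auto simp: C lower_cut_def) (meson not_le)+
    with 2 DE show thesis using that(2) by blast
  qed
qed

lemma principal_lower_cut_UNIV_iff:
  fixes S :: "'a::linorder set"
  assumes no_least: "\<And>s. s \<in> S \<Longrightarrow> \<exists>s'\<in>S. s' < s"
  shows "principal_cut (lower_cut UNIV S) \<longleftrightarrow>
    (\<exists>m. (\<forall>s\<in>S. m < s) \<and> (\<forall>x. (\<forall>s\<in>S. x < s) \<longrightarrow> x \<le> m))"
proof -
  have cut: "lower_cut UNIV S = ({x. \<forall>s\<in>S. x < s}, {x. \<exists>s\<in>S. s \<le> x})"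
    by (auto simp: lower_cut_def not_le)
  moreover have "\<not> (\<exists>e. (\<exists>s\<in>S. s \<le> e) \<and> (\<forall>x. (\<exists>s\<in>S. s \<le> x) \<longrightarrow> e \<le> x))"
    using no_least by (metis less_le_not_le order.trans)
  ultimately show ?thesis
    unfolding principal_cut_def cut fst_conv snd_conv mem_Collect_eq Bex_def Ball_def by blast
qed

lemma principal_upper_cut_UNIV_iff:
  fixes S :: "'a::linorder set"
  assumes no_greatest: "\<And>s. s \<in> S \<Longrightarrow> \<exists>s'\<in>S. s < s'"
  shows "principal_cut (upper_cut UNIV S) \<longleftrightarrow>
    (\<exists>m. (\<forall>s\<in>S. s < m) \<and> (\<forall>x. (\<forall>s\<in>S. s < x) \<longrightarrow> m \<le> x))"
proof -
  have cut: "upper_cut UNIV S = ({x. \<exists>s\<in>S. x \<le> s}, {x. \<forall>s\<in>S. s < x})"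
    by (auto simp: upper_cut_def not_le)
  moreover have "\<not> (\<exists>d. (\<exists>s\<in>S. d \<le> s) \<and> (\<forall>x. (\<exists>s\<in>S. x \<le> s) \<longrightarrow> x \<le> d))"
    using no_greatest by (metis less_le_not_le order.trans)
  ultimately show ?thesis
    unfolding principal_cut_def cut fst_conv snd_conv mem_Collect_eq Bex_def Ball_def by blast
qed

lemma cval_ring_iff_bounded:
  "(z::'a::linordered_field) \<in> cval_ring \<longleftrightarrow> (\<exists>n::nat. \<bar>z\<bar> \<le> of_nat n)"
proof
  assume "z \<in> cval_ring"
  then obtain m n :: int where "of_int m \<le> z" "z \<le> of_int n"
    unfolding cval_ring_def by blast
  moreover have "- of_int (max \<bar>m\<bar> \<bar>n\<bar>) \<le> (of_int m :: 'a)"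
    "of_int n \<le> (of_int (max \<bar>m\<bar> \<bar>n\<bar>) :: 'a)"
    by (simp_all only: of_int_minus[symmetric] of_int_le_iff)
  ultimately have "\<bar>z\<bar> \<le> of_int (max \<bar>m\<bar> \<bar>n\<bar>)"
    unfolding abs_le_iff by linarith
  then have "\<bar>z\<bar> \<le> of_nat (nat (max \<bar>m\<bar> \<bar>n\<bar>))"
    by simp
  then show "\<exists>n::nat. \<bar>z\<bar> \<le> of_nat n" ..
next
  assume "\<exists>n::nat. \<bar>z\<bar> \<le> of_nat n"
  then obtain n :: nat where "\<bar>z\<bar> \<le> of_nat n" ..
  then have "of_int (- int n) \<le> z" "z \<le> of_int (int n)"
    by (simp_all add: abs_le_iff)
  then show "z \<in> cval_ring"
    unfolding cval_ring_def by blast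
qed

lemma cval_ring_mult:
  assumes "(z::'a::linordered_field) \<in> cval_ring" "w \<in> cval_ring"
  shows "z * w \<in> cval_ring"
proof -
  obtain m n :: nat where "\<bar>z\<bar> \<le> of_nat m" "\<bar>w\<bar> \<le> of_nat n"
    using assms by (auto simp: cval_ring_iff_bounded)
  then have "\<bar>z * w\<bar> \<le> of_nat (m * n)"
    by (simp add: abs_mult mult_mono)
  then show ?thesis
    unfolding cval_ring_iff_bounded ..
qed

lemma one_in_cval_ring: "1 \<in> cval_ring"
  by (auto simp: cval_ring_iff_bounded intro: exI[of _ 1])

lemma in_cval_self: "(x::'a::linordered_field) \<in> cval x"
  unfolding cval_def using one_in_cval_ring by force

lemma cval_0: "cval (0::'a::linordered_field) = {0}"
  unfolding cval_def using one_in_cval_ring by force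

lemma val_le_cval_iff:
  fixes x y :: "'a::linordered_field"
  assumes "x \<noteq> 0"
  shows "val_le (cval x) (cval y) \<longleftrightarrow> y / x \<in> cval_ring"
proof
  assume "val_le (cval x) (cval y)"
  then obtain u w where u: "u \<in> cval_ring" "u \<noteq> 0" and w: "w \<noteq> 0" "inverse w \<in> cval_ring"
    and quotient: "(y * w) / (x * u) \<in> cval_ring"
    unfolding val_le_def cval_def by auto
  have "y / x = ((y * w) / (x * u)) * (u * inverse w)"
    using assms u w by (simp add: field_simps)
  moreover have "((y * w) / (x * u)) * (u * inverse w) \<in> cval_ring"
    using quotient u(1) w(2) by (intro cval_ring_mult)
  ultimately show "y / x \<in> cval_ring"
    by simp
qed (use assms in_cval_self in \<open>auto simp: val_le_def\<close>)

definition arbitrarily_small_elements :: "'a::linordered_field set \<Rightarrow> bool" where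
  "arbitrarily_small_elements R \<longleftrightarrow> (\<forall>\<epsilon>>0. \<exists>\<delta>\<in>R. 0 < \<delta> \<and> \<delta> \<le> \<epsilon>)"

context
  fixes R :: "'a::linordered_field set"
  assumes subfield: "is_subfield R"
begin

lemma subfield_0: "0 \<in> R" and subfield_1: "1 \<in> R"
  using subfield by (auto simp: is_subfield_def)

lemma subfield_add: "x \<in> R \<Longrightarrow> y \<in> R \<Longrightarrow> x + y \<in> R"
  and subfield_mult: "x \<in> R \<Longrightarrow> y \<in> R \<Longrightarrow> x * y \<in> R"
  and subfield_uminus: "x \<in> R \<Longrightarrow> - x \<in> R"
  using subfield by (auto simp: is_subfield_def)

lemma subfield_inverse: "x \<in> R \<Longrightarrow> inverse x \<in> R"
  using subfield by (cases "x = 0") (auto simp: is_subfield_def)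

lemma subfield_diff: "x \<in> R \<Longrightarrow> y \<in> R \<Longrightarrow> x - y \<in> R"
  using subfield_add subfield_uminus by (metis diff_conv_add_uminus)

lemma subfield_divide: "x \<in> R \<Longrightarrow> y \<in> R \<Longrightarrow> x / y \<in> R"
  using subfield_mult subfield_inverse by (simp add: divide_inverse)

lemma subfield_abs: "x \<in> R \<Longrightarrow> \<bar>x\<bar> \<in> R"
  using subfield_uminus by (cases "x \<ge> 0") auto

lemma subfield_of_nat: "of_nat n \<in> R"
  by (induction n) (auto simp: subfield_0 subfield_1 subfield_add)

lemma subfield_midpoint: "x \<in> R \<Longrightarrow> y \<in> R \<Longrightarrow> (x + y) / 2 \<in> R"
  using subfield_divide[OF subfield_add subfield_of_nat[of 2]] by simp

lemma value_group_cofinal_iff: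
  "(\<forall>g\<in>value_set UNIV. \<exists>h\<in>value_set R. val_le g h) \<longleftrightarrow> arbitrarily_small_elements R"
proof -
  have "(\<forall>g\<in>value_set UNIV. \<exists>h\<in>value_set R. val_le g h) \<longleftrightarrow>
      (\<forall>x. x \<noteq> 0 \<longrightarrow> (\<exists>y\<in>R. y \<noteq> 0 \<and> (\<exists>n::nat. \<bar>y\<bar> / \<bar>x\<bar> \<le> of_nat n)))"
    by (auto simp: value_set_def val_le_cval_iff cval_ring_iff_bounded) blast
  also have "\<dots> \<longleftrightarrow> arbitrarily_small_elements R"
    unfolding arbitrarily_small_elements_def
  proof safe
    fix \<epsilon> :: 'a
    assume bounded: "\<forall>x. x \<noteq> 0 \<longrightarrow> (\<exists>y\<in>R. y \<noteq> 0 \<and> (\<exists>n::nat. \<bar>y\<bar> / \<bar>x\<bar> \<le> of_nat n))"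
      and "0 < \<epsilon>"
    have "\<exists>y\<in>R. y \<noteq> 0 \<and> (\<exists>n::nat. \<bar>y\<bar> / \<bar>\<epsilon>\<bar> \<le> of_nat n)"
      using \<open>0 < \<epsilon>\<close> by (intro bounded[rule_format]) simp
    then obtain y n where y: "y \<in> R" "y \<noteq> 0" and "\<bar>y\<bar> / \<bar>\<epsilon>\<bar> \<le> of_nat n"
      by blast
    with \<open>0 < \<epsilon>\<close> have n: "\<bar>y\<bar> \<le> of_nat n * \<epsilon>"
      by (simp add: divide_le_eq)
    with y have "0 < of_nat n * \<epsilon>"
      by (meson less_le_trans zero_less_abs_iff)
    with \<open>0 < \<epsilon>\<close> have "0 < (of_nat n :: 'a)"
      by (simp add: zero_less_mult_iff)
    with n y show "\<exists>\<delta>\<in>R. 0 < \<delta> \<and> \<delta> \<le> \<epsilon>"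
      by (intro bexI[of _ "\<bar>y\<bar> / of_nat n"])
        (auto simp: divide_le_eq mult.commute subfield_divide subfield_abs subfield_of_nat)
  next
    fix x :: 'a
    assume "\<forall>\<epsilon>>0. \<exists>\<delta>\<in>R. 0 < \<delta> \<and> \<delta> \<le> \<epsilon>" and "x \<noteq> 0"
    then obtain \<delta> where "\<delta> \<in> R" "0 < \<delta>" "\<delta> \<le> \<bar>x\<bar>"
      by (meson zero_less_abs_iff)
    then show "\<exists>y\<in>R. y \<noteq> 0 \<and> (\<exists>n::nat. \<bar>y\<bar> / \<bar>x\<bar> \<le> of_nat n)"
      using \<open>x \<noteq> 0\<close> by (intro bexI[of _ \<delta>] conjI exI[of _ 1]) (auto simp: abs_div_pos)
  qed
  finally show ?thesis .
qed

lemma principal_cut_above_iff: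
  assumes a: "a \<in> R"
  shows "principal_cut (lower_cut UNIV {t\<in>R. a < t}) \<longleftrightarrow> arbitrarily_small_elements R"
proof -
  have "principal_cut (lower_cut UNIV {t\<in>R. a < t}) \<longleftrightarrow>
      (\<exists>m. (\<forall>t\<in>{t\<in>R. a < t}. m < t) \<and> (\<forall>x. (\<forall>t\<in>{t\<in>R. a < t}. x < t) \<longrightarrow> x \<le> m))"
  proof (rule principal_lower_cut_UNIV_iff)
    fix t assume "t \<in> {t\<in>R. a < t}"
    with a show "\<exists>t'\<in>{t\<in>R. a < t}. t' < t"
      by (intro bexI[of _ "(a + t) / 2"]) (auto simp: subfield_midpoint)
  qed
  also have "\<dots> \<longleftrightarrow> arbitrarily_small_elements R"
  proof
    assume "\<exists>m. (\<forall>t\<in>{t\<in>R. a < t}. m < t) \<and> (\<forall>x. (\<forall>t\<in>{t\<in>R. a < t}. x < t) \<longrightarrow> x \<le> m)"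
    then obtain m where below: "\<forall>t\<in>{t\<in>R. a < t}. m < t"
      and greatest: "\<forall>x. (\<forall>t\<in>{t\<in>R. a < t}. x < t) \<longrightarrow> x \<le> m"
      by blast
    show "arbitrarily_small_elements R"
    proof (rule ccontr)
      assume "\<not> arbitrarily_small_elements R"
      then obtain \<epsilon> where "0 < \<epsilon>" and gap: "\<And>\<delta>. \<delta> \<in> R \<Longrightarrow> 0 < \<delta> \<Longrightarrow> \<epsilon> < \<delta>"
        by (auto simp: arbitrarily_small_elements_def not_le)
      have "m + \<epsilon> / 2 \<le> m"
      proof (rule greatest[rule_format])
        fix t assume "t \<in> {t\<in>R. a < t}"
        with a have "(a + t) / 2 \<in> {t\<in>R. a < t}" "\<epsilon> < t - a"
          by (auto intro: gap simp: subfield_midpoint subfield_diff)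
        with below have "m < (a + t) / 2" "\<epsilon> < t - a"
          by blast+
        then show "m + \<epsilon> / 2 < t"
          by (simp add: field_simps)
      qed
      with \<open>0 < \<epsilon>\<close> show False
        by simp
    qed
  next
    assume small: "arbitrarily_small_elements R"
    have "x \<le> a" if above: "\<And>t. t \<in> R \<Longrightarrow> a < t \<Longrightarrow> x < t" for x
    proof (rule ccontr)
      assume "\<not> x \<le> a"
      with small obtain \<delta> where "\<delta> \<in> R" "0 < \<delta>" "\<delta> \<le> x - a"
        unfolding arbitrarily_small_elements_def by (meson diff_gt_0_iff_gt not_le)
      with a above[of "a + \<delta>"] show False
        by (simp add: subfield_add)
    qed
    then show "\<exists>m. (\<forall>t\<in>{t\<in>R. a < t}. m < t) \<and> (\<forall>x. (\<forall>t\<in>{t\<in>R. a < t}. x < t) \<longrightarrow> x \<le> m)"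
      by (intro exI[of _ a]) auto
  qed
  finally show ?thesis .
qed

lemma principal_cut_below_iff:
  assumes a: "a \<in> R"
  shows "principal_cut (upper_cut UNIV {t\<in>R. t < a}) \<longleftrightarrow> arbitrarily_small_elements R"
proof -
  have "principal_cut (upper_cut UNIV {t\<in>R. t < a}) \<longleftrightarrow>
      (\<exists>m. (\<forall>t\<in>{t\<in>R. t < a}. t < m) \<and> (\<forall>x. (\<forall>t\<in>{t\<in>R. t < a}. t < x) \<longrightarrow> m \<le> x))"
  proof (rule principal_upper_cut_UNIV_iff)
    fix t assume "t \<in> {t\<in>R. t < a}"
    with a show "\<exists>t'\<in>{t\<in>R. t < a}. t < t'"
      by (intro bexI[of _ "(t + a) / 2"]) (auto simp: subfield_midpoint)
  qed
  also have "\<dots> \<longleftrightarrow> arbitrarily_small_elements R"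
  proof
    assume "\<exists>m. (\<forall>t\<in>{t\<in>R. t < a}. t < m) \<and> (\<forall>x. (\<forall>t\<in>{t\<in>R. t < a}. t < x) \<longrightarrow> m \<le> x)"
    then obtain m where above: "\<forall>t\<in>{t\<in>R. t < a}. t < m"
      and least: "\<forall>x. (\<forall>t\<in>{t\<in>R. t < a}. t < x) \<longrightarrow> m \<le> x"
      by blast
    show "arbitrarily_small_elements R"
    proof (rule ccontr)
      assume "\<not> arbitrarily_small_elements R"
      then obtain \<epsilon> where "0 < \<epsilon>" and gap: "\<And>\<delta>. \<delta> \<in> R \<Longrightarrow> 0 < \<delta> \<Longrightarrow> \<epsilon> < \<delta>"
        by (auto simp: arbitrarily_small_elements_def not_le)
      have "m \<le> m - \<epsilon> / 2"
      proof (rule least[rule_format])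
        fix t assume "t \<in> {t\<in>R. t < a}"
        with a have "(t + a) / 2 \<in> {t\<in>R. t < a}" "\<epsilon> < a - t"
          by (auto intro: gap simp: subfield_midpoint subfield_diff)
        with above have "(t + a) / 2 < m" "\<epsilon> < a - t"
          by blast+
        then show "t < m - \<epsilon> / 2"
          by (simp add: field_simps)
      qed
      with \<open>0 < \<epsilon>\<close> show False
        by simp
    qed
  next
    assume small: "arbitrarily_small_elements R"
    have "a \<le> x" if below: "\<And>t. t \<in> R \<Longrightarrow> t < a \<Longrightarrow> t < x" for x
    proof (rule ccontr)
      assume "\<not> a \<le> x"
      with small obtain \<delta> where "\<delta> \<in> R" "0 < \<delta>" "\<delta> \<le> a - x"
        unfolding arbitrarily_small_elements_def by (meson diff_gt_0_iff_gt not_le)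
      with a below[of "a - \<delta>"] show False
        by (simp add: subfield_diff)
    qed
    then show "\<exists>m. (\<forall>t\<in>{t\<in>R. t < a}. t < m) \<and> (\<forall>x. (\<forall>t\<in>{t\<in>R. t < a}. t < x) \<longrightarrow> m \<le> x)"
      by (intro exI[of _ a]) auto
  qed
  finally show ?thesis .
qed

lemma singleton_is_ball: "a \<in> R \<Longrightarrow> is_ball R {a}"
  unfolding is_ball_def
proof (intro bexI exI conjI)
  show "final_segment (value_set R) {}"
    by (simp add: final_segment_def)
  have "cval (a - b) = cval 0 \<longleftrightarrow> b = a" for b
    using in_cval_self[of "a - b"] by (auto simp: cval_0)
  then show "{a} = vball {} a R" if "a \<in> R"
    using that by (auto simp: vball_def)
qed

lemma singleton_ne_subfield: "{a} \<noteq> R"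
  using subfield_0 subfield_1 by (metis singletonD zero_neq_one)

lemma singleton_ball_complement:
  "a \<in> R \<Longrightarrow> ball_complement R {a} ({t\<in>R. t < a}, {t\<in>R. a < t})"
  by (auto simp: ball_complement_def)

end

theorem proposition4p6:
  fixes R :: "'a::linordered_field set"
    and \<iota> :: "'a set \<times> 'a set \<Rightarrow> 'a set \<times> 'a set"
  assumes sub: "is_subfield R"
    and nonball: "\<And>D E. is_cut R (D, E) \<Longrightarrow> \<not> ball_cut R (D, E) \<Longrightarrow>
        \<iota> (D, E) = upper_cut UNIV D \<or> \<iota> (D, E) = lower_cut UNIV E"
    and ballc: "\<And>B0 D E. is_ball R B0 \<Longrightarrow> B0 \<noteq> R \<Longrightarrow> ball_complement R B0 (D, E) \<Longrightarrow>
        \<iota> (lower_cut R B0) = upper_cut UNIV D \<and> \<iota> (upper_cut R B0) = lower_cut UNIV E"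
    and empty_left: "\<iota> ({}, R) = lower_cut UNIV R"
    and empty_right: "\<iota> (R, {}) = upper_cut UNIV R"
  shows "((\<forall>g\<in>value_set (UNIV::'a set). \<exists>h\<in>value_set R. val_le g h) \<longrightarrow>
            (\<forall>C. is_cut R C \<and> principal_cut C \<longrightarrow> principal_cut (\<iota> C)))
       \<and> (\<not> (\<forall>g\<in>value_set (UNIV::'a set). \<exists>h\<in>value_set R. val_le g h) \<longrightarrow>
            (\<forall>C. is_cut R C \<and> principal_cut C \<longrightarrow> \<not> principal_cut (\<iota> C)))"
proof -
  have edge_images: "\<iota> (upper_cut R {a}) = lower_cut UNIV {t\<in>R. a < t}"
    "\<iota> (lower_cut R {a}) = upper_cut UNIV {t\<in>R. t < a}" if "a \<in> R" for a
    using ballc[OF singleton_is_ball[OF sub that] singleton_ne_subfield[OF sub]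
        singleton_ball_complement[OF sub that]]
    by simp_all
  have "principal_cut (\<iota> C) \<longleftrightarrow> arbitrarily_small_elements R"
    if "is_cut R C" "principal_cut C" for C
    using that
  proof (cases rule: principal_cut_cases)
    case (1 a)
    then show ?thesis by (simp add: edge_images principal_cut_above_iff[OF sub])
  next
    case (2 a)
    then show ?thesis by (simp add: edge_images principal_cut_below_iff[OF sub])
  qed
  then show ?thesis
    using value_group_cofinal_iff[OF sub] by blast
qed

end
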